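(* Let $G$ be a combinatorial 4-PPT of the interior of a simple cycle $C$ with $b$ vertices, of which $c$ have their reflex angle inside the cycle. Then the number $t$ of triangular faces of $G$ is $t=b-2c-2$.
   Context: An angle is a vertex–face incidence of a plane embedded graph. A combinatorial 4-PPT of the interior of a simple cycle $C$ means: a plane simple graph $G$ whose outer face is bounded by the simple cycle $C$, all of whose interior faces have size 3 or 4, with a tag "reflex" or "convex" on each interior angle such that every interior face has exactly three convex angles, every vertex not on $C$ is incident to exactly one reflex angle, and every vertex of $C$ is incident to at most one reflex angle (a vertex of $C$ "has its reflex angle inside the cycle" if it has a reflex-tagged angle in an interior face; the other vertices of $C$ have their reflex angle outside). For instance, $C$ together with everything inside it in a combinatorial 4-PPT (a combinatorial pointed pseudo-triangulation with interior faces of size 3 or 4) is such a structure. *)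

theory Defs
  imports Main
begin

(* A plane graph is encoded by its faces: each face is a cyclic list of vertices
   (its boundary walk, traversed with the face on the left). *)

definition cyc_darts :: "'a list \<Rightarrow> ('a \<times> 'a) set" where
  "cyc_darts f = {(f ! i, f ! (Suc i mod length f)) | i. i < length f}"

definition all_darts :: "'a list set \<Rightarrow> ('a \<times> 'a) set" where
  "all_darts FF = (\<Union>f\<in>FF. cyc_darts f)"

definition verts :: "'a list set \<Rightarrow> 'a set" where
  "verts FF = (\<Union>f\<in>FF. set f)"

definition edges :: "'a list set \<Rightarrow> 'a set set" where
  "edges FF = {{u, v} | u v. (u, v) \<in> all_darts FF}"

definition face_next :: "'a list set \<Rightarrow> ('a \<times> 'a) \<Rightarrow> ('a \<times> 'a) \<Rightarrow> bool" where
  "face_next FF d d' \<longleftrightarrow> (\<exists>f\<in>FF. \<exists>i<length f.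
      d = (f ! i, f ! (Suc i mod length f)) \<and>
      d' = (f ! (Suc i mod length f), f ! (Suc (Suc i) mod length f)))"

definition rot_step :: "'a list set \<Rightarrow> ('a \<times> 'a) \<Rightarrow> ('a \<times> 'a) \<Rightarrow> bool" where
  "rot_step FF d d' \<longleftrightarrow> face_next FF (snd d, fst d) d'"

(* Combinatorial plane simple graph on the sphere with face set FF
   (Heffter-Edmonds face-list encoding): every dart lies in exactly one face,
   darts come in reverse pairs, the rotation at each vertex is a single cycle,
   the graph is connected, and the Euler characteristic is 2 (sphere). *)
definition plane_faces :: "'a list set \<Rightarrow> bool" where
  "plane_faces FF \<longleftrightarrow>
     finite FF \<and>
     (\<forall>f\<in>FF. distinct f \<and> length f \<ge> 3) \<and>
     (\<forall>f\<in>FF. \<forall>g\<in>FF. f \<noteq> g \<longrightarrow> cyc_darts f \<inter> cyc_darts g = {}) \<and>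
     (\<forall>(u, v)\<in>all_darts FF. (v, u) \<in> all_darts FF) \<and>
     (\<forall>v\<in>verts FF. \<forall>d\<in>all_darts FF. \<forall>d'\<in>all_darts FF.
        fst d = v \<longrightarrow> fst d' = v \<longrightarrow> (d, d') \<in> {(a, b). rot_step FF a b}\<^sup>*) \<and>
     (\<forall>u\<in>verts FF. \<forall>v\<in>verts FF. (u, v) \<in> (all_darts FF)\<^sup>*) \<and>
     int (card (verts FF)) - int (card (edges FF)) + int (card FF) = 2"

(* G is a plane simple graph whose outer face is bounded by the simple cycle C
   and whose interior faces are the (simple-cycle) faces in F. *)
definition plane_disk :: "'a list \<Rightarrow> 'a list set \<Rightarrow> bool" where
  "plane_disk C F \<longleftrightarrow> distinct C \<and> length C \<ge> 3 \<and> C \<notin> F \<and> plane_faces (insert C F)"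

(* Angles are vertex-face incidences (v,f), v \<in> set f; reflex f v tags the angle
   of interior face f at v as reflex (otherwise convex). *)
definition comb_4PPT :: "'a list \<Rightarrow> 'a list set \<Rightarrow> ('a list \<Rightarrow> 'a \<Rightarrow> bool) \<Rightarrow> bool" where
  "comb_4PPT C F reflex \<longleftrightarrow>
     plane_disk C F \<and>
     (\<forall>f\<in>F. length f = 3 \<or> length f = 4) \<and>
     (\<forall>f\<in>F. card {v \<in> set f. \<not> reflex f v} = 3) \<and>
     (\<forall>v\<in>verts F - set C. card {f \<in> F. v \<in> set f \<and> reflex f v} = 1) \<and>
     (\<forall>v\<in>set C. card {f \<in> F. v \<in> set f \<and> reflex f v} \<le> 1)"

definition reflex_inside :: "'a list set \<Rightarrow> ('a list \<Rightarrow> 'a \<Rightarrow> bool) \<Rightarrow> 'a \<Rightarrow> bool" where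
  "reflex_inside F reflex v \<longleftrightarrow> (\<exists>f\<in>F. v \<in> set f \<and> reflex f v)"

end

theory Submission
  imports Defs
begin

text \<open>Three counts combine with Euler's formula \<open>V - E + F = 2\<close>. Counting darts face by face gives
  \<open>2E = b + \<Sum>f. |f|\<close>; counting reflex angles face by face (each interior face has \<open>|f| - 3\<close>
  of them) and vertex by vertex gives \<open>\<Sum>f. (|f| - 3) = i + c\<close>, with \<open>i\<close> the number of interior
  vertices; and \<open>\<Sum>f. |f| = 4n - t\<close> for the \<open>n\<close> interior faces. Eliminating \<open>E\<close>, \<open>i\<close> and
  \<open>\<Sum>f. |f|\<close> from \<open>(i + b) - E + (n + 1) = 2\<close> leaves \<open>t = b - 2c - 2\<close>.\<close>

lemma cyc_darts_conv_image:
  "cyc_darts f = (\<lambda>i. (f ! i, f ! (Suc i mod length f))) ` {..<length f}"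
  unfolding cyc_darts_def by auto

lemma finite_cyc_darts: "finite (cyc_darts f)"
  by (simp add: cyc_darts_conv_image)

lemma card_cyc_darts:
  assumes "distinct f"
  shows "card (cyc_darts f) = length f"
proof -
  have "inj_on (\<lambda>i. (f ! i, f ! (Suc i mod length f))) {..<length f}"
    using assms by (auto simp: inj_on_def nth_eq_iff_index_eq)
  then show ?thesis
    by (simp add: cyc_darts_conv_image card_image)
qed

lemma cyc_darts_irrefl:
  assumes "distinct f" "length f \<ge> 3" "(u, v) \<in> cyc_darts f"
  shows "u \<noteq> v"
proof -
  obtain i where i: "i < length f" "u = f ! i" "v = f ! (Suc i mod length f)"
    using assms(3) unfolding cyc_darts_def by auto
  have "Suc i mod length f \<noteq> i"
  proof (cases "Suc i < length f")
    case False
    then have "Suc i = length f"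
      using i(1) by simp
    then show ?thesis
      using assms(2) by simp
  qed simp
  moreover have "Suc i mod length f < length f"
    using i(1) by (intro mod_less_divisor) auto
  ultimately show ?thesis
    using i assms(1) by (simp add: nth_eq_iff_index_eq)
qed

lemma finite_all_darts: "finite FF \<Longrightarrow> finite (all_darts FF)"
  unfolding all_darts_def by (simp add: finite_cyc_darts)

lemma card_all_darts:
  assumes "finite FF" "\<forall>f\<in>FF. distinct f"
    and "\<forall>f\<in>FF. \<forall>g\<in>FF. f \<noteq> g \<longrightarrow> cyc_darts f \<inter> cyc_darts g = {}"
  shows "card (all_darts FF) = (\<Sum>f\<in>FF. length f)"
  unfolding all_darts_def using assms
  by (subst card_UN_disjoint) (auto simp: finite_cyc_darts card_cyc_darts)

lemma card_sym_darts_eq_twice_edges: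
  fixes D :: "('a \<times> 'a) set"
  assumes "finite D" and sym: "\<forall>(u, v)\<in>D. (v, u) \<in> D" and irrefl: "\<forall>(u, v)\<in>D. u \<noteq> v"
  shows "card D = 2 * card {{u, v} | u v. (u, v) \<in> D}"
proof -
  let ?E = "{{u, v} | u v. (u, v) \<in> D}"
  have "finite ?E"
    by (rule finite_subset[of _ "(\<lambda>d. {fst d, snd d}) ` D"])
      (use \<open>finite D\<close> in \<open>auto intro: rev_image_eqI\<close>)
  have fibre: "card {d \<in> D. e = {fst d, snd d}} = 2" if "e \<in> ?E" for e
  proof -
    obtain u v where e: "e = {u, v}" "(u, v) \<in> D"
      using \<open>e \<in> ?E\<close> by blast
    have "{d \<in> D. e = {fst d, snd d}} = {(u, v), (v, u)}"
      using e sym by (auto simp: doubleton_eq_iff)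
    then show ?thesis
      using e irrefl by auto
  qed
  have "(\<Sum>d\<in>D. card {e \<in> ?E. e = {fst d, snd d}}) = 2 * card ?E"
    by (rule sum_multicount[OF \<open>finite D\<close> \<open>finite ?E\<close>]) (use fibre in blast)
  moreover have "card {e \<in> ?E. e = {fst d, snd d}} = 1" if "d \<in> D" for d
  proof -
    have "{e \<in> ?E. e = {fst d, snd d}} = {{fst d, snd d}}"
      using that by (cases d) auto
    then show ?thesis by simp
  qed
  ultimately show ?thesis
    by simp
qed

lemma plane_faces_twice_card_edges:
  assumes "plane_faces FF"
  shows "2 * card (edges FF) = (\<Sum>f\<in>FF. length f)"
proof -
  have fin: "finite FF" and faces: "\<forall>f\<in>FF. distinct f \<and> length f \<ge> 3"
    and disj: "\<forall>f\<in>FF. \<forall>g\<in>FF. f \<noteq> g \<longrightarrow> cyc_darts f \<inter> cyc_darts g = {}"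
    and sym: "\<forall>(u, v)\<in>all_darts FF. (v, u) \<in> all_darts FF"
    using assms unfolding plane_faces_def by blast+
  have irrefl: "\<forall>(u, v)\<in>all_darts FF. u \<noteq> v"
    using faces cyc_darts_irrefl unfolding all_darts_def by fast
  show ?thesis
    using card_sym_darts_eq_twice_edges[OF finite_all_darts[OF fin] sym irrefl]
      card_all_darts[OF fin _ disj] faces
    unfolding edges_def by simp
qed

lemma plane_disk_euler:
  assumes "plane_disk C F"
  shows "int (card (verts F - set C)) + int (length C) - int (card (edges (insert C F)))
           + int (card F) = 1"
proof -
  have "distinct C" "C \<notin> F" and pf: "plane_faces (insert C F)"
    using assms unfolding plane_disk_def by blast+
  then have "finite F"
    unfolding plane_faces_def by simp
  then have "finite (verts F)"
    unfolding verts_def by simp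
  have "verts (insert C F) = (verts F - set C) \<union> set C"
    unfolding verts_def by auto
  then have "card (verts (insert C F)) = card (verts F - set C) + card (set C)"
    using \<open>finite (verts F)\<close> by (simp only:) (rule card_Un_disjoint, auto)
  then have "card (verts (insert C F)) = card (verts F - set C) + length C"
    using \<open>distinct C\<close> by (simp add: distinct_card)
  then show ?thesis
    using pf \<open>finite F\<close> \<open>C \<notin> F\<close> unfolding plane_faces_def by simp
qed

lemma comb_4PPT_length_sum_reflex:
  assumes "comb_4PPT C F reflex"
  shows "(\<Sum>f\<in>F. length f) =
           3 * card F + card (verts F - set C) + card {v \<in> set C. reflex_inside F reflex v}"
proof -
  have convex: "\<forall>f\<in>F. card {v \<in> set f. \<not> reflex f v} = 3"
    and interior: "\<forall>v\<in>verts F - set C. card {f \<in> F. v \<in> set f \<and> reflex f v} = 1"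
    and boundary: "\<forall>v\<in>set C. card {f \<in> F. v \<in> set f \<and> reflex f v} \<le> 1"
    and pf: "plane_faces (insert C F)"
    using assms unfolding comb_4PPT_def plane_disk_def by blast+
  have "finite F" and distinct: "\<forall>f\<in>F. distinct f"
    using pf unfolding plane_faces_def by auto
  let ?V = "(verts F - set C) \<union> set C"
  let ?refl = "\<lambda>v. card {f \<in> F. v \<in> set f \<and> reflex f v}"
  have "finite ?V"
    using \<open>finite F\<close> unfolding verts_def by simp
  have reflex_count: "?refl v = of_bool (reflex_inside F reflex v)" if "v \<in> set C" for v
  proof (cases "reflex_inside F reflex v")
    case True
    then have "?refl v \<noteq> 0"
      using \<open>finite F\<close> unfolding reflex_inside_def by auto
    then show ?thesis
      using True boundary that by fastforce
  next
    case False
    then have "{f \<in> F. v \<in> set f \<and> reflex f v} = {}"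
      unfolding reflex_inside_def by blast
    then have "?refl v = 0"
      by (simp only: card.empty)
    then show ?thesis
      using False by simp
  qed
  have "(\<Sum>f\<in>F. length f) = (\<Sum>f\<in>F. 3 + card {v \<in> set f. reflex f v})"
  proof (rule sum.cong[OF refl])
    fix f assume "f \<in> F"
    have "set f = {v \<in> set f. \<not> reflex f v} \<union> {v \<in> set f. reflex f v}"
      by blast
    then have "card (set f) = card ({v \<in> set f. \<not> reflex f v} \<union> {v \<in> set f. reflex f v})"
      by (rule arg_cong)
    also have "\<dots> = card {v \<in> set f. \<not> reflex f v} + card {v \<in> set f. reflex f v}"
      by (rule card_Un_disjoint) auto
    finally show "length f = 3 + card {v \<in> set f. reflex f v}"
      using \<open>f \<in> F\<close> convex distinct by (simp add: distinct_card)
  qed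
  also have "\<dots> = 3 * card F + (\<Sum>v\<in>?V. ?refl v)"
  proof -
    have "(\<Sum>f\<in>F. card {v \<in> ?V. v \<in> set f \<and> reflex f v}) = (\<Sum>v\<in>?V. ?refl v)"
      by (rule sum_multicount_gen[OF \<open>finite F\<close> \<open>finite ?V\<close>]) simp
    moreover have "{v \<in> ?V. v \<in> set f \<and> reflex f v} = {v \<in> set f. reflex f v}" if "f \<in> F" for f
      using that unfolding verts_def by blast
    ultimately show ?thesis
      by (simp add: sum.distrib)
  qed
  also have "(\<Sum>v\<in>?V. ?refl v) = (\<Sum>v\<in>verts F - set C. ?refl v) + (\<Sum>v\<in>set C. ?refl v)"
    using \<open>finite ?V\<close> by (intro sum.union_disjoint) auto
  also have "\<dots> = card (verts F - set C) + card {v \<in> set C. reflex_inside F reflex v}"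
    using interior reflex_count by (simp add: Collect_conj_eq Int_commute)
  finally show ?thesis
    by simp
qed

lemma comb_4PPT_length_sum_triangles:
  assumes "comb_4PPT C F reflex"
  shows "int (\<Sum>f\<in>F. length f) = 4 * int (card F) - int (card {f \<in> F. length f = 3})"
proof -
  have lengths: "\<forall>f\<in>F. length f = 3 \<or> length f = 4" and "plane_faces (insert C F)"
    using assms unfolding comb_4PPT_def plane_disk_def by blast+
  then have "finite F"
    unfolding plane_faces_def by simp
  have "int (\<Sum>f\<in>F. length f) = (\<Sum>f\<in>F. 4 - of_bool (length f = 3))"
    unfolding of_nat_sum by (rule sum.cong[OF refl]) (use lengths in auto)
  also have "\<dots> = 4 * int (card F) - int (card {f \<in> F. length f = 3})"
    using \<open>finite F\<close> by (simp add: sum_subtractf Collect_conj_eq Int_commute)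
  finally show ?thesis .
qed

theorem corollary1:
  fixes C :: "'a list" and F :: "'a list set" and reflex :: "'a list \<Rightarrow> 'a \<Rightarrow> bool"
    and b c t :: nat
  assumes "comb_4PPT C F reflex"
    and "b = length C"
    and "c = card {v \<in> set C. reflex_inside F reflex v}"
    and "t = card {f \<in> F. length f = 3}"
  shows "int t = int b - 2 * int c - 2"
proof -
  have "plane_disk C F"
    using assms(1) unfolding comb_4PPT_def by simp
  then have "C \<notin> F" and "plane_faces (insert C F)"
    unfolding plane_disk_def by simp_all
  then have "finite F"
    unfolding plane_faces_def by simp
  have "2 * card (edges (insert C F)) = (\<Sum>f\<in>insert C F. length f)"
    using \<open>plane_faces (insert C F)\<close> by (rule plane_faces_twice_card_edges)
  also have "\<dots> = b + (\<Sum>f\<in>F. length f)"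
    using \<open>finite F\<close> \<open>C \<notin> F\<close> assms(2) by simp
  finally have edges: "2 * card (edges (insert C F)) = b + (\<Sum>f\<in>F. length f)" .
  show ?thesis
    using plane_disk_euler[OF \<open>plane_disk C F\<close>] edges
      comb_4PPT_length_sum_reflex[OF assms(1)] comb_4PPT_length_sum_triangles[OF assms(1)]
      assms(2-4) by linarith
qed

end
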